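(* Let $a_1,\dots,a_n\in\mathbb{F}$ and $r_1,\dots,r_n\in\mathbb{Z}_+$ be such that $\Omega=\{(x-a_1)^{r_1},\dots,(x-a_n)^{r_n}\}\subseteq\mathbb{F}[x;\sigma,\delta]$ has size $n$. (1) If $\Omega$ is P-independent, then so is $\{(x-a_1)^{s_1},\dots,(x-a_n)^{s_n}\}$ for all $s_1,\dots,s_n\in\mathbb{Z}_+$ with $s_i\le r_i$ for all $i$. (2) If $\Omega$ is P-independent, then the set $\{a_1,\dots,a_n\}\subseteq\mathbb{F}$ has size $n$ and is P-independent.
   Context: Let $\mathbb{F}$ be a division ring, $\sigma$ a ring endomorphism of $\mathbb{F}$ and $\delta$ a $\sigma$-derivation; $\mathbb{F}[x;\sigma,\delta]$ is the skew polynomial ring with $xa=\sigma(a)x+\delta(a)$ (a domain with right Euclidean division). For a set $\Omega$ of skew polynomials, $I(\Omega)$ is the left ideal of skew polynomials right-divisible by every element of $\Omega$, $F_\Omega$ its monic generator of minimal degree (or $0$ if $I(\Omega)=\{0\}$). $\Omega$ is P-independent if it is finite, $I(\Omega)\ne\{0\}$ and $\deg F_\Omega=\sum_{P\in\Omega}\deg P$. A finite set $\{b_1,\dots,b_k\}\subseteq\mathbb{F}$ of distinct elements is P-independent if $\{x-b_1,\dots,x-b_k\}$ is. *)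

theory Defs
  imports "HOL-Computational_Algebra.Polynomial"
begin

text \<open>Skew polynomials over a division ring, represented by their (left) coefficient
  sequences: a polynomial p stands for sum over i of (coeff p i) x^i, with coefficients
  on the left.  The multiplication is determined by x a = sigma(a) x + delta(a).\<close>

definition ring_endo :: "('a::division_ring \<Rightarrow> 'a) \<Rightarrow> bool" where
  "ring_endo \<sigma> \<longleftrightarrow> (\<forall>a b. \<sigma> (a + b) = \<sigma> a + \<sigma> b) \<and> (\<forall>a b. \<sigma> (a * b) = \<sigma> a * \<sigma> b) \<and> \<sigma> 1 = 1"

definition sigma_derivation :: "('a::division_ring \<Rightarrow> 'a) \<Rightarrow> ('a \<Rightarrow> 'a) \<Rightarrow> bool" where
  "sigma_derivation \<sigma> \<delta> \<longleftrightarrow> (\<forall>a b. \<delta> (a + b) = \<delta> a + \<delta> b) \<and>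
      (\<forall>a b. \<delta> (a * b) = \<sigma> a * \<delta> b + \<delta> a * b)"

definition skew_xmul :: "('a::division_ring \<Rightarrow> 'a) \<Rightarrow> ('a \<Rightarrow> 'a) \<Rightarrow> 'a poly \<Rightarrow> 'a poly" where
  "skew_xmul \<sigma> \<delta> p = pCons 0 (map_poly \<sigma> p) + map_poly \<delta> p"

definition lsmult :: "'a::division_ring \<Rightarrow> 'a poly \<Rightarrow> 'a poly" where
  "lsmult a p = map_poly (\<lambda>c. a * c) p"

definition skew_mult :: "('a::division_ring \<Rightarrow> 'a) \<Rightarrow> ('a \<Rightarrow> 'a) \<Rightarrow> 'a poly \<Rightarrow> 'a poly \<Rightarrow> 'a poly" where
  "skew_mult \<sigma> \<delta> p q = (\<Sum>i\<le>degree p. lsmult (coeff p i) ((skew_xmul \<sigma> \<delta> ^^ i) q))"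

definition skew_pow :: "('a::division_ring \<Rightarrow> 'a) \<Rightarrow> ('a \<Rightarrow> 'a) \<Rightarrow> 'a poly \<Rightarrow> nat \<Rightarrow> 'a poly" where
  "skew_pow \<sigma> \<delta> p n = ((\<lambda>q. skew_mult \<sigma> \<delta> q p) ^^ n) [:1:]"

definition skew_I :: "('a::division_ring \<Rightarrow> 'a) \<Rightarrow> ('a \<Rightarrow> 'a) \<Rightarrow> 'a poly set \<Rightarrow> 'a poly set" where
  "skew_I \<sigma> \<delta> \<Omega> = {F. \<forall>P\<in>\<Omega>. \<exists>G. F = skew_mult \<sigma> \<delta> G P}"

definition skew_F :: "('a::division_ring \<Rightarrow> 'a) \<Rightarrow> ('a \<Rightarrow> 'a) \<Rightarrow> 'a poly set \<Rightarrow> 'a poly" where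
  "skew_F \<sigma> \<delta> \<Omega> = (if skew_I \<sigma> \<delta> \<Omega> = {0} then 0 else
     (THE F. F \<in> skew_I \<sigma> \<delta> \<Omega> \<and> lead_coeff F = 1 \<and>
        (\<forall>G\<in>skew_I \<sigma> \<delta> \<Omega>. G \<noteq> 0 \<longrightarrow> degree F \<le> degree G)))"

definition P_independent :: "('a::division_ring \<Rightarrow> 'a) \<Rightarrow> ('a \<Rightarrow> 'a) \<Rightarrow> 'a poly set \<Rightarrow> bool" where
  "P_independent \<sigma> \<delta> \<Omega> \<longleftrightarrow> finite \<Omega> \<and> skew_I \<sigma> \<delta> \<Omega> \<noteq> {0} \<and>
     degree (skew_F \<sigma> \<delta> \<Omega>) = (\<Sum>P\<in>\<Omega>. degree P)"

definition P_independent_elems :: "('a::division_ring \<Rightarrow> 'a) \<Rightarrow> ('a \<Rightarrow> 'a) \<Rightarrow> 'a set \<Rightarrow> bool" where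
  "P_independent_elems \<sigma> \<delta> B \<longleftrightarrow> finite B \<and> P_independent \<sigma> \<delta> ((\<lambda>b. [:- b, 1:]) ` B)"

end

theory Submission
  imports Defs
begin

text \<open>
  Right division by a monic skew polynomial P leaves a unique remainder of degree below deg P,
  and taking remainders is left linear.  For a finite set Omega of monic polynomials this gives
  a left linear map from F[x;sigma,delta] to a space of dimension sum of deg P over Omega, whose
  kernel is I(Omega).  Since it is injective on polynomials of degree below deg F_Omega, we get
  deg F_Omega <= sum of deg P, with equality iff the map is onto, i.e. iff the Chinese remainder
  theorem holds for Omega.  Solvability of remainder problems passes from the powers
  (x - a_i)^(r_i) to their right divisors (x - a_i)^(s_i), which gives (1).  For (2): if
  a_i = a_j with r_i <= r_j, then (x - a_i)^(r_i) right-divides (x - a_j)^(r_j), so dropping it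
  changes neither I(Omega) nor F_Omega but lowers the degree sum; and s_i = 1 in (1) gives
  P-independence of the a_i.
\<close>

lemma coeff_lsmult [simp]: "coeff (lsmult c p) k = c * coeff p k"
  by (simp add: lsmult_def coeff_map_poly)

lemma lsmult_0_left [simp]: "lsmult 0 p = 0"
  by (simp add: poly_eq_iff)

lemma lsmult_0_right [simp]: "lsmult c 0 = 0"
  by (simp add: poly_eq_iff)

lemma lsmult_1 [simp]: "lsmult 1 p = p"
  by (simp add: poly_eq_iff)

lemma lsmult_add_right: "lsmult c (p + q) = lsmult c p + lsmult c q"
  by (simp add: poly_eq_iff algebra_simps)

lemma lsmult_add_left: "lsmult (c + d) p = lsmult c p + lsmult d p"
  by (simp add: poly_eq_iff algebra_simps)

lemma lsmult_diff_right: "lsmult c (p - q) = lsmult c p - lsmult c q"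
  by (simp add: poly_eq_iff algebra_simps)

lemma lsmult_lsmult: "lsmult c (lsmult d p) = lsmult (c * d) p"
  by (simp add: poly_eq_iff algebra_simps)

lemma lsmult_pCons: "lsmult c (pCons a p) = pCons (c * a) (lsmult c p)"
  by (simp add: poly_eq_iff coeff_pCons split: nat.splits)

lemma degree_lsmult:
  assumes "c \<noteq> 0" shows "degree (lsmult c p) = degree p"
proof (cases "p = 0")
  case False
  then have "coeff (lsmult c p) (degree p) \<noteq> 0"
    using assms by simp
  then show ?thesis
    by (intro antisym degree_le le_degree) (simp add: coeff_eq_0)
qed simp

lemma lead_coeff_lsmult: "lead_coeff (lsmult c p) = c * lead_coeff p"
  by (cases "c = 0") (simp_all add: degree_lsmult)

lemma degree_diff_less_if_lead_coeff_eq: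
  fixes p q :: "'a::ab_group_add poly"
  assumes "degree p = degree q" "lead_coeff p = lead_coeff q" "p \<noteq> q"
  shows "degree (p - q) < degree p"
proof (rule degree_lessI)
  show "p - q \<noteq> 0 \<or> 0 < degree p"
    using assms(3) by simp
  show "\<forall>k\<ge>degree p. coeff (p - q) k = 0"
    using assms(1,2) by (auto simp: coeff_eq_0 le_less)
qed

lemma coeff_sum_lsmult_monom:
  "coeff (\<Sum>j<m. lsmult (c j) (monom 1 j)) i = (if i < m then c i else 0)"
  by (simp add: coeff_sum if_distrib[of "(*) _"] cong: if_cong)

section \<open>Linear dependence over a division ring\<close>

lemma linearly_dependent_if_card_less:
  fixes u :: "'j \<Rightarrow> 'k \<Rightarrow> 'a::division_ring"
  assumes "finite K" "finite J" "card K < card J" "\<forall>j\<in>J. \<forall>k. k \<notin> K \<longrightarrow> u j k = 0"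
  shows "\<exists>c. (\<exists>j\<in>J. c j \<noteq> 0) \<and> (\<forall>k. (\<Sum>j\<in>J. c j * u j k) = 0)"
  using assms
proof (induction K arbitrary: J u rule: finite_induct)
  case empty
  then show ?case
    by (intro exI[of _ "\<lambda>_. 1"]) (auto simp: card_gt_0_iff)
next
  case (insert b K)
  show ?case
  proof (cases "\<forall>j\<in>J. u j b = 0")
    case True
    then have "\<forall>j\<in>J. \<forall>k. k \<notin> K \<longrightarrow> u j k = 0"
      using insert.prems(3) by (metis insertE)
    moreover have "card K < card J"
      using insert.hyps insert.prems(2) by simp
    ultimately show ?thesis
      using insert.IH insert.prems(1) by blast
  next
    case False
    then obtain j0 where j0: "j0 \<in> J" "u j0 b \<noteq> 0" by auto
    define J' where "J' = J - {j0}"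
    define t where "t j = u j b * inverse (u j0 b)" for j
    \<comment> \<open>Gaussian elimination: clear coordinate b using the pivot vector j0.\<close>
    define w where "w j k = u j k - t j * u j0 k" for j k
    have "\<forall>j\<in>J'. \<forall>k. k \<notin> K \<longrightarrow> w j k = 0"
    proof (intro ballI allI impI)
      fix j k assume "j \<in> J'" "k \<notin> K"
      then show "w j k = 0"
        using j0 insert.prems(3) by (cases "k = b") (auto simp: w_def t_def J'_def mult.assoc)
    qed
    moreover have "finite J'" "card K < card J'"
      using insert j0 by (simp_all add: J'_def)
    ultimately obtain c' where c': "\<exists>j\<in>J'. c' j \<noteq> 0" "\<forall>k. (\<Sum>j\<in>J'. c' j * w j k) = 0"
      using insert.IH by blast
    define c where "c = c'(j0 := - (\<Sum>j\<in>J'. c' j * t j))"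
    have "(\<Sum>j\<in>J. c j * u j k) = 0" for k
    proof -
      have "(\<Sum>j\<in>J. c j * u j k) = c j0 * u j0 k + (\<Sum>j\<in>J'. c' j * u j k)"
        using j0 insert.prems(1) by (simp add: J'_def sum.remove c_def)
      also have "\<dots> = (\<Sum>j\<in>J'. c' j * w j k)"
        by (simp add: c_def w_def right_diff_distrib sum_subtractf sum_distrib_right mult.assoc)
      finally show ?thesis using c'(2) by simp
    qed
    moreover have "\<exists>j\<in>J. c j \<noteq> 0"
      using c'(1) by (auto simp: c_def J'_def)
    ultimately show ?thesis by blast
  qed
qed

lemma card_le_if_linearly_independent:
  fixes u :: "'j \<Rightarrow> 'k \<Rightarrow> 'a::division_ring"
  assumes "finite K" "finite J" "\<forall>j\<in>J. \<forall>k. k \<notin> K \<longrightarrow> u j k = 0"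
    and "\<And>c. \<forall>k. (\<Sum>j\<in>J. c j * u j k) = 0 \<Longrightarrow> \<forall>j\<in>J. c j = 0"
  shows "card J \<le> card K"
  using linearly_dependent_if_card_less[OF assms(1,2) _ assms(3)] assms(4) by force

lemma spanned_if_linearly_independent_card_eq:
  fixes u :: "'j \<Rightarrow> 'k \<Rightarrow> 'a::division_ring"
  assumes "finite K" "finite J" "card J = card K" "\<forall>j\<in>J. \<forall>k. k \<notin> K \<longrightarrow> u j k = 0"
    and indep: "\<And>c. \<forall>k. (\<Sum>j\<in>J. c j * u j k) = 0 \<Longrightarrow> \<forall>j\<in>J. c j = 0"
    and "\<forall>k. k \<notin> K \<longrightarrow> v k = 0"
  shows "\<exists>c. \<forall>k. (\<Sum>j\<in>J. c j * u j k) = v k"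
proof -
  define u' where "u' j = (case j of None \<Rightarrow> v | Some j \<Rightarrow> u j)" for j
  define J' where "J' = insert None (Some ` J)"
  have "finite J'" "card K < card J'"
    using assms(2,3) by (simp_all add: J'_def card_image)
  moreover have "\<forall>j\<in>J'. \<forall>k. k \<notin> K \<longrightarrow> u' j k = 0"
    using assms(4,6) by (auto simp: u'_def J'_def)
  ultimately obtain c where c: "\<exists>j\<in>J'. c j \<noteq> 0" "\<forall>k. (\<Sum>j\<in>J'. c j * u' j k) = 0"
    using linearly_dependent_if_card_less[OF assms(1)] by blast
  have split: "c None * v k + (\<Sum>j\<in>J. c (Some j) * u j k) = 0" for k
    using c(2) assms(2) by (simp add: J'_def u'_def sum.reindex)
  have "c None \<noteq> 0"
  proof
    assume "c None = 0"
    then have "\<forall>j\<in>J. c (Some j) = 0"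
      using indep[of "c \<circ> Some"] split by simp
    with \<open>c None = 0\<close> c(1) show False by (auto simp: J'_def)
  qed
  show ?thesis
  proof (intro exI allI)
    fix k
    have "(\<Sum>j\<in>J. (- inverse (c None) * c (Some j)) * u j k)
        = - inverse (c None) * (\<Sum>j\<in>J. c (Some j) * u j k)"
      by (simp add: sum_distrib_left mult.assoc)
    also have "(\<Sum>j\<in>J. c (Some j) * u j k) = - (c None * v k)"
      using split[of k] by (metis add.commute eq_neg_iff_add_eq_0)
    finally show "(\<Sum>j\<in>J. (- inverse (c None) * c (Some j)) * u j k) = v k"
      using \<open>c None \<noteq> 0\<close> by (simp add: mult.assoc[symmetric])
  qed
qed

section \<open>Skew polynomial arithmetic\<close>

locale skew_poly_ring =
  fixes \<sigma> \<delta> :: "'a::division_ring \<Rightarrow> 'a"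
  assumes endo: "ring_endo \<sigma>" and derivation: "sigma_derivation \<sigma> \<delta>"
begin

abbreviation X :: "'a poly \<Rightarrow> 'a poly" where "X \<equiv> skew_xmul \<sigma> \<delta>"

abbreviation skew_times :: "'a poly \<Rightarrow> 'a poly \<Rightarrow> 'a poly" (infixl "\<odot>" 70)
  where "p \<odot> q \<equiv> skew_mult \<sigma> \<delta> p q"

lemma sigma_add: "\<sigma> (a + b) = \<sigma> a + \<sigma> b"
  using endo by (simp add: ring_endo_def)

lemma sigma_mult: "\<sigma> (a * b) = \<sigma> a * \<sigma> b"
  using endo by (simp add: ring_endo_def)

lemma sigma_1 [simp]: "\<sigma> 1 = 1"
  using endo by (simp add: ring_endo_def)

lemma delta_add: "\<delta> (a + b) = \<delta> a + \<delta> b"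
  using derivation by (simp add: sigma_derivation_def)

lemma delta_mult: "\<delta> (a * b) = \<sigma> a * \<delta> b + \<delta> a * b"
  using derivation by (simp add: sigma_derivation_def)

lemma sigma_0 [simp]: "\<sigma> 0 = 0"
  using sigma_add[of 0 0] by simp

lemma delta_0 [simp]: "\<delta> 0 = 0"
  using delta_add[of 0 0] by simp

lemma coeff_X: "coeff (X p) k = (if k = 0 then 0 else \<sigma> (coeff p (k - 1))) + \<delta> (coeff p k)"
  by (simp add: skew_xmul_def coeff_pCons coeff_map_poly split: nat.splits)

lemma X_0 [simp]: "X 0 = 0"
  by (simp add: poly_eq_iff coeff_X)

lemma X_add: "X (p + q) = X p + X q"
  by (simp add: poly_eq_iff coeff_X sigma_add delta_add algebra_simps)

lemma X_lsmult: "X (lsmult c p) = lsmult (\<sigma> c) (X p) + lsmult (\<delta> c) p"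
  by (simp add: poly_eq_iff coeff_X sigma_mult delta_mult algebra_simps)

lemma X_pCons: "X (pCons b p) = pCons (\<delta> b) ([:\<sigma> b:] + X p)"
  by (simp add: poly_eq_iff coeff_X coeff_pCons split: nat.splits)

lemma skew_mult_0_left [simp]: "0 \<odot> q = 0"
  by (simp add: skew_mult_def)

lemma skew_mult_pCons_left: "pCons a p \<odot> q = lsmult a q + p \<odot> X q"
proof -
  have "pCons a p \<odot> q = (\<Sum>i\<le>Suc (degree p). lsmult (coeff (pCons a p) i) ((X^^i) q))"
    unfolding skew_mult_def
    by (intro sum.mono_neutral_left) (auto simp: degree_pCons_le le_Suc_eq coeff_eq_0)
  also have "\<dots> = lsmult a q + (\<Sum>i\<le>degree p. lsmult (coeff p i) ((X^^i) (X q)))"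
    by (subst sum.atMost_Suc_shift) (simp add: funpow_Suc_right del: funpow.simps)
  finally show ?thesis
    by (simp add: skew_mult_def)
qed

lemma skew_mult_const_left: "[:c:] \<odot> q = lsmult c q"
  by (simp add: skew_mult_pCons_left)

lemma skew_mult_lsmult_left: "lsmult c p \<odot> q = lsmult c (p \<odot> q)"
  by (induction p arbitrary: q)
    (simp_all add: skew_mult_pCons_left lsmult_pCons lsmult_add_right lsmult_lsmult)

lemma skew_mult_add_left: "(p1 + p2) \<odot> q = p1 \<odot> q + p2 \<odot> q"
proof (induction p1 arbitrary: p2 q)
  case (pCons a p)
  obtain b p' where "p2 = pCons b p'"
    by (cases p2)
  then show ?case
    using pCons.IH[of p' "X q"] by (simp add: skew_mult_pCons_left lsmult_add_left algebra_simps)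
qed simp

lemma skew_mult_minus_left: "(- p) \<odot> q = - (p \<odot> q)"
  using skew_mult_add_left[of p "- p" q] by (simp add: add.inverse_unique)

lemma skew_mult_diff_left: "(p1 - p2) \<odot> q = p1 \<odot> q - p2 \<odot> q"
  using skew_mult_add_left[of p1 "- p2" q] by (simp add: skew_mult_minus_left)

lemma X_skew_mult: "X p \<odot> r = X (p \<odot> r)"
  by (induction p arbitrary: r)
    (simp_all add: X_pCons skew_mult_pCons_left skew_mult_add_left skew_mult_const_left
      X_add X_lsmult algebra_simps)

lemma skew_mult_assoc: "(p \<odot> q) \<odot> r = p \<odot> (q \<odot> r)"
  by (induction p arbitrary: q)
    (simp_all add: skew_mult_pCons_left skew_mult_add_left skew_mult_lsmult_left X_skew_mult)

lemma X_monic: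
  assumes "lead_coeff g = 1"
  shows "degree (X g) = Suc (degree g)" "lead_coeff (X g) = 1"
proof -
  have lc: "coeff (X g) (Suc (degree g)) = 1"
    using assms by (simp add: coeff_X coeff_eq_0)
  then show "degree (X g) = Suc (degree g)"
    by (intro antisym degree_le le_degree) (auto simp: coeff_X coeff_eq_0)
  with lc show "lead_coeff (X g) = 1"
    by simp
qed

lemma skew_mult_monic:
  assumes "p \<noteq> 0" "lead_coeff g = 1"
  shows "degree (p \<odot> g) = degree p + degree g \<and> lead_coeff (p \<odot> g) = lead_coeff p"
  using assms
proof (induction p arbitrary: g)
  case (pCons a p)
  show ?case
  proof (cases "p = 0")
    case True
    with pCons.prems show ?thesis
      by (simp add: skew_mult_pCons_left degree_lsmult lead_coeff_lsmult)
  next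
    case False
    have Xg: "lead_coeff (X g) = 1" "degree (X g) = Suc (degree g)"
      using X_monic[OF pCons.prems(2)] by simp_all
    have IH: "degree (p \<odot> X g) = degree p + Suc (degree g)" "lead_coeff (p \<odot> X g) = lead_coeff p"
      using pCons.IH[OF False Xg(1)] Xg(2) by metis+
    have less: "degree (lsmult a g) < degree (p \<odot> X g)"
      using IH by (cases "a = 0") (simp_all add: degree_lsmult)
    then have "coeff (lsmult a g) (degree (p \<odot> X g)) = 0"
      by (simp add: coeff_eq_0 del: coeff_lsmult)
    then show ?thesis
      using degree_add_eq_right[OF less] IH False by (simp add: skew_mult_pCons_left)
  qed
qed simp

lemmas degree_skew_mult_monic = skew_mult_monic[THEN conjunct1]
lemmas lead_coeff_skew_mult_monic = skew_mult_monic[THEN conjunct2]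

definition right_dvd :: "'a poly \<Rightarrow> 'a poly \<Rightarrow> bool" where
  "right_dvd g h \<longleftrightarrow> (\<exists>q. h = q \<odot> g)"

definition reduced :: "'a poly \<Rightarrow> 'a poly \<Rightarrow> bool" where
  "reduced g r \<longleftrightarrow> (\<forall>k\<ge>degree g. coeff r k = 0)"

lemma right_dvd_0 [simp]: "right_dvd g 0"
  unfolding right_dvd_def by (rule exI[of _ 0]) simp

lemma right_dvd_add: "right_dvd g a \<Longrightarrow> right_dvd g b \<Longrightarrow> right_dvd g (a + b)"
  unfolding right_dvd_def by (metis skew_mult_add_left)

lemma right_dvd_minus: "right_dvd g a \<Longrightarrow> right_dvd g (- a)"
  unfolding right_dvd_def by (metis skew_mult_minus_left)

lemma right_dvd_diff: "right_dvd g a \<Longrightarrow> right_dvd g b \<Longrightarrow> right_dvd g (a - b)"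
  unfolding right_dvd_def by (metis skew_mult_diff_left)

lemma right_dvd_lsmult: "right_dvd g a \<Longrightarrow> right_dvd g (lsmult c a)"
  unfolding right_dvd_def by (metis skew_mult_lsmult_left)

lemma right_dvd_trans: "right_dvd g a \<Longrightarrow> right_dvd a b \<Longrightarrow> right_dvd g b"
  unfolding right_dvd_def by (metis skew_mult_assoc)

lemma reduced_0 [simp]: "reduced g 0"
  by (simp add: reduced_def)

lemma reduced_add: "reduced g a \<Longrightarrow> reduced g b \<Longrightarrow> reduced g (a + b)"
  by (simp add: reduced_def)

lemma reduced_lsmult: "reduced g a \<Longrightarrow> reduced g (lsmult c a)"
  by (simp add: reduced_def)

lemma degree_le_if_right_dvd:
  assumes "lead_coeff g = 1" "right_dvd g h" "h \<noteq> 0"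
  shows "degree g \<le> degree h"
proof -
  obtain q where "h = q \<odot> g"
    using assms(2) by (auto simp: right_dvd_def)
  moreover have "q \<noteq> 0"
    using assms(3) calculation by auto
  ultimately show ?thesis
    using degree_skew_mult_monic[OF _ assms(1)] by simp
qed

lemma reduced_right_dvd_eq_0:
  assumes "lead_coeff g = 1" "reduced g r" "right_dvd g r"
  shows "r = 0"
proof (rule ccontr)
  assume "r \<noteq> 0"
  then have "coeff r (degree r) \<noteq> 0" and "degree g \<le> degree r"
    using degree_le_if_right_dvd[OF assms(1,3)] by simp_all
  with assms(2) show False
    by (simp add: reduced_def)
qed

lemma right_division:
  assumes "lead_coeff g = 1"
  shows "\<exists>r. reduced g r \<and> right_dvd g (h - r)"
proof (induction "degree h" arbitrary: h rule: less_induct)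
  case less
  show ?case
  proof (cases "reduced g h")
    case False
    then have "h \<noteq> 0" and dh: "degree g \<le> degree h"
      using le_degree by (fastforce simp: reduced_def)+
    define m where "m = monom (lead_coeff h) (degree h - degree g)"
    have m: "m \<noteq> 0" "degree m = degree h - degree g" "lead_coeff m = lead_coeff h"
      using \<open>h \<noteq> 0\<close> by (simp_all add: m_def degree_monom_eq)
    have mg: "degree (m \<odot> g) = degree h" "lead_coeff (m \<odot> g) = lead_coeff h"
      using degree_skew_mult_monic[OF m(1) assms] lead_coeff_skew_mult_monic[OF m(1) assms] m dh
      by simp_all
    have "right_dvd g (m \<odot> g)"
      by (auto simp: right_dvd_def)
    show ?thesis
    proof (cases "h = m \<odot> g")
      case False
      then have "degree (h - m \<odot> g) < degree h"
        using mg by (intro degree_diff_less_if_lead_coeff_eq) auto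
      then obtain r where "reduced g r" "right_dvd g (h - m \<odot> g - r)"
        using less by blast
      moreover have "h - r = (h - m \<odot> g - r) + m \<odot> g"
        by simp
      ultimately show ?thesis
        using right_dvd_add \<open>right_dvd g (m \<odot> g)\<close> by metis
    qed (intro exI[of _ 0], simp add: \<open>right_dvd g (m \<odot> g)\<close>)
  qed (intro exI[of _ h], simp)
qed

definition rrem :: "'a poly \<Rightarrow> 'a poly \<Rightarrow> 'a poly" where
  "rrem g h = (SOME r. reduced g r \<and> right_dvd g (h - r))"

context
  fixes g :: "'a poly"
  assumes monic: "lead_coeff g = 1"
begin

lemma reduced_rrem: "reduced g (rrem g h)"
  and right_dvd_diff_rrem: "right_dvd g (h - rrem g h)"
  using someI_ex[OF right_division[OF monic, of h]] unfolding rrem_def by auto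

lemma rrem_unique:
  assumes "reduced g r" "right_dvd g (h - r)"
  shows "rrem g h = r"
proof -
  have "reduced g (rrem g h - r)"
    using reduced_rrem assms(1) by (simp add: reduced_def)
  moreover have "right_dvd g (rrem g h - r)"
    using right_dvd_diff[OF assms(2) right_dvd_diff_rrem[of h]] by simp
  ultimately show ?thesis
    using reduced_right_dvd_eq_0[OF monic] by fastforce
qed

lemma rrem_add: "rrem g (a + b) = rrem g a + rrem g b"
proof (rule rrem_unique)
  show "reduced g (rrem g a + rrem g b)"
    by (intro reduced_add reduced_rrem)
  have "a + b - (rrem g a + rrem g b) = (a - rrem g a) + (b - rrem g b)"
    by simp
  then show "right_dvd g (a + b - (rrem g a + rrem g b))"
    by (metis right_dvd_add right_dvd_diff_rrem)
qed

lemma rrem_lsmult: "rrem g (lsmult c a) = lsmult c (rrem g a)"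
  by (rule rrem_unique)
    (simp_all add: reduced_lsmult reduced_rrem right_dvd_lsmult right_dvd_diff_rrem
      flip: lsmult_diff_right)

lemma rrem_0: "rrem g 0 = 0"
  by (rule rrem_unique) auto

lemma rrem_sum_lsmult: "rrem g (\<Sum>j\<in>J. lsmult (c j) (p j)) = (\<Sum>j\<in>J. lsmult (c j) (rrem g (p j)))"
  by (induction J rule: infinite_finite_induct) (simp_all add: rrem_0 rrem_add rrem_lsmult)

lemma rrem_eq_0_iff: "rrem g h = 0 \<longleftrightarrow> right_dvd g h"
  using right_dvd_diff_rrem[of h] rrem_unique[of 0 h] by auto

lemma rrem_eq_if_right_dvd_diff: "right_dvd g (a - b) \<Longrightarrow> rrem g a = rrem g b"
  using rrem_add[of "a - b" b] rrem_eq_0_iff by simp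

end

subsection \<open>Least common left multiples and the Chinese remainder property\<close>

abbreviation I :: "'a poly set \<Rightarrow> 'a poly set" where "I \<equiv> skew_I \<sigma> \<delta>"

text \<open>F_Omega is the least common left multiple of Omega.\<close>
abbreviation lclm :: "'a poly set \<Rightarrow> 'a poly" where "lclm \<equiv> skew_F \<sigma> \<delta>"

lemma mem_I_iff: "G \<in> I \<Omega> \<longleftrightarrow> (\<forall>P\<in>\<Omega>. right_dvd P G)"
  by (simp add: skew_I_def right_dvd_def)

lemma I_antimono_right_dvd:
  assumes "\<forall>Q\<in>\<Omega>'. \<exists>P\<in>\<Omega>. right_dvd Q P"
  shows "I \<Omega> \<subseteq> I \<Omega>'"
  using assms right_dvd_trans by (fastforce simp: mem_I_iff)

lemma lclm_eq_if_I_eq: "I \<Omega> = I \<Omega>' \<Longrightarrow> lclm \<Omega> = lclm \<Omega>'"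
  by (simp add: skew_F_def)

lemma ex1_monic_minimal_in_I:
  assumes "I \<Omega> \<noteq> {0}"
  shows "\<exists>!F. F \<in> I \<Omega> \<and> lead_coeff F = 1 \<and> (\<forall>G\<in>I \<Omega>. G \<noteq> 0 \<longrightarrow> degree F \<le> degree G)"
proof -
  have "0 \<in> I \<Omega>"
    by (simp add: mem_I_iff)
  with assms obtain G where "G \<in> I \<Omega>" "G \<noteq> 0"
    by blast
  then obtain G0 where G0: "G0 \<in> I \<Omega>" "G0 \<noteq> 0"
    and min: "\<And>G. G \<in> I \<Omega> \<Longrightarrow> G \<noteq> 0 \<Longrightarrow> degree G0 \<le> degree G"
    using ex_has_least_nat[of "\<lambda>G. G \<in> I \<Omega> \<and> G \<noteq> 0" G degree] by blast
  define F0 where "F0 = lsmult (inverse (lead_coeff G0)) G0"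
  have F0: "F0 \<in> I \<Omega>" "lead_coeff F0 = 1" "degree F0 = degree G0"
    using G0 by (simp_all add: F0_def mem_I_iff right_dvd_lsmult degree_lsmult lead_coeff_lsmult)
  show ?thesis
  proof (rule ex1I[of _ F0])
    fix F
    assume F: "F \<in> I \<Omega> \<and> lead_coeff F = 1 \<and> (\<forall>G\<in>I \<Omega>. G \<noteq> 0 \<longrightarrow> degree F \<le> degree G)"
    then have "F \<noteq> 0"
      by auto
    have "degree F \<le> degree G0" "degree G0 \<le> degree F"
      using F G0 min[of F] \<open>F \<noteq> 0\<close> by auto
    then have "degree F = degree F0"
      using F0(3) by simp
    show "F = F0"
    proof (rule ccontr)
      assume "F \<noteq> F0"
      then have "degree (F - F0) < degree F0"
        using \<open>degree F = degree F0\<close> F F0(2)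
        by (metis degree_diff_less_if_lead_coeff_eq)
      moreover have "F - F0 \<in> I \<Omega>"
        using F F0(1) by (auto simp: mem_I_iff intro: right_dvd_diff)
      ultimately show False
        using min[of "F - F0"] \<open>F \<noteq> F0\<close> F0(3) by simp
    qed
  qed (use F0 min in auto)
qed

context
  fixes \<Omega> :: "'a poly set"
  assumes nontrivial: "I \<Omega> \<noteq> {0}"
begin

lemma lclm_in_I: "lclm \<Omega> \<in> I \<Omega>"
  and lead_coeff_lclm: "lead_coeff (lclm \<Omega>) = 1"
  and degree_lclm_le: "G \<in> I \<Omega> \<Longrightarrow> G \<noteq> 0 \<Longrightarrow> degree (lclm \<Omega>) \<le> degree G"
  using theI'[OF ex1_monic_minimal_in_I[OF nontrivial]] nontrivial by (auto simp: skew_F_def)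

lemma eq_0_if_in_I_degree_less: "G \<in> I \<Omega> \<Longrightarrow> degree G < degree (lclm \<Omega>) \<Longrightarrow> G = 0"
  using degree_lclm_le by fastforce

end

definition residue_coords :: "'a poly set \<Rightarrow> ('a poly \<times> nat) set" where
  "residue_coords \<Omega> = Sigma \<Omega> (\<lambda>P. {..<degree P})"

definition coord_vector :: "'a poly set \<Rightarrow> ('a poly \<Rightarrow> 'a poly) \<Rightarrow> 'a poly \<times> nat \<Rightarrow> 'a" where
  "coord_vector \<Omega> t = (\<lambda>(P, k). if P \<in> \<Omega> then coeff (t P) k else 0)"

text \<open>The remainders of h modulo the members of Omega, as one vector in a left vector space
  of dimension sum of deg P over Omega.\<close>
abbreviation residues :: "'a poly set \<Rightarrow> 'a poly \<Rightarrow> 'a poly \<times> nat \<Rightarrow> 'a" where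
  "residues \<Omega> h \<equiv> coord_vector \<Omega> (\<lambda>P. rrem P h)"

definition chinese_remainder :: "'a poly set \<Rightarrow> bool" where
  "chinese_remainder \<Omega> \<longleftrightarrow>
     (\<forall>t. (\<forall>P\<in>\<Omega>. reduced P (t P)) \<longrightarrow> (\<exists>h. \<forall>P\<in>\<Omega>. right_dvd P (h - t P)))"

lemma coord_vector_eq_iff: "coord_vector \<Omega> t = coord_vector \<Omega> t' \<longleftrightarrow> (\<forall>P\<in>\<Omega>. t P = t' P)"
  by (auto simp: coord_vector_def fun_eq_iff poly_eq_iff)

lemma coord_vector_eq_0_outside:
  "\<forall>P\<in>\<Omega>. reduced P (t P) \<Longrightarrow> \<kappa> \<notin> residue_coords \<Omega> \<Longrightarrow> coord_vector \<Omega> t \<kappa> = 0"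
  by (cases \<kappa>) (auto simp: coord_vector_def residue_coords_def reduced_def)

context
  fixes \<Omega> :: "'a poly set"
  assumes finite: "finite \<Omega>" and monic: "\<forall>P\<in>\<Omega>. lead_coeff P = 1"
begin

lemma card_residue_coords: "card (residue_coords \<Omega>) = (\<Sum>P\<in>\<Omega>. degree P)"
  and finite_residue_coords: "finite (residue_coords \<Omega>)"
  using finite by (simp_all add: residue_coords_def)

lemma residues_eq_0_outside: "\<kappa> \<notin> residue_coords \<Omega> \<Longrightarrow> residues \<Omega> h \<kappa> = 0"
  using monic reduced_rrem by (intro coord_vector_eq_0_outside) auto

lemma residues_sum_lsmult:
  "residues \<Omega> (\<Sum>j\<in>J. lsmult (c j) (p j)) \<kappa> = (\<Sum>j\<in>J. c j * residues \<Omega> (p j) \<kappa>)"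
  using monic by (cases \<kappa>) (simp add: coord_vector_def rrem_sum_lsmult coeff_sum)

lemma in_I_iff_residues_eq_0: "h \<in> I \<Omega> \<longleftrightarrow> residues \<Omega> h = (\<lambda>_. 0)"
proof -
  have "h \<in> I \<Omega> \<longleftrightarrow> (\<forall>P\<in>\<Omega>. rrem P h = 0)"
    using monic by (simp add: mem_I_iff rrem_eq_0_iff)
  also have "\<dots> \<longleftrightarrow> residues \<Omega> h = coord_vector \<Omega> (\<lambda>_. 0)"
    by (simp add: coord_vector_eq_iff)
  also have "coord_vector \<Omega> (\<lambda>_. 0) = (\<lambda>_. 0)"
    by (auto simp: coord_vector_def)
  finally show ?thesis .
qed

context
  assumes nontrivial: "I \<Omega> \<noteq> {0}"
begin

lemma residues_monom_independent:
  assumes "\<forall>\<kappa>. (\<Sum>j<degree (lclm \<Omega>). c j * residues \<Omega> (monom 1 j) \<kappa>) = 0"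
  shows "\<forall>j\<in>{..<degree (lclm \<Omega>)}. c j = 0"
proof (cases "degree (lclm \<Omega>) = 0")
  case False
  define g where "g = (\<Sum>j<degree (lclm \<Omega>). lsmult (c j) (monom 1 j))"
  have "residues \<Omega> g = (\<lambda>_. 0)"
    using assms unfolding g_def fun_eq_iff residues_sum_lsmult by blast
  then have "g \<in> I \<Omega>"
    by (simp add: in_I_iff_residues_eq_0)
  moreover have "degree g < degree (lclm \<Omega>)"
    using False by (intro degree_lessI) (simp_all add: g_def coeff_sum_lsmult_monom)
  ultimately have "g = 0"
    using eq_0_if_in_I_degree_less[OF nontrivial] by blast
  then show ?thesis
    using coeff_sum_lsmult_monom[where c = c] by (metis g_def coeff_0 lessThan_iff)
qed simp

lemma degree_lclm_le_sum_degree: "degree (lclm \<Omega>) \<le> (\<Sum>P\<in>\<Omega>. degree P)"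
  using card_le_if_linearly_independent[OF finite_residue_coords finite_lessThan _
      residues_monom_independent, of "\<lambda>j. residues \<Omega> (monom 1 j)"]
    residues_eq_0_outside
  by (simp add: card_residue_coords)

lemma chinese_remainder_if_degree_lclm_eq:
  assumes "degree (lclm \<Omega>) = (\<Sum>P\<in>\<Omega>. degree P)"
  shows "chinese_remainder \<Omega>"
  unfolding chinese_remainder_def
proof (intro allI impI)
  fix t
  assume t: "\<forall>P\<in>\<Omega>. reduced P (t P)"
  obtain c where c: "\<forall>\<kappa>. (\<Sum>j<degree (lclm \<Omega>). c j * residues \<Omega> (monom 1 j) \<kappa>) = coord_vector \<Omega> t \<kappa>"
    using spanned_if_linearly_independent_card_eq[OF finite_residue_coords finite_lessThan _ _
        residues_monom_independent, of "\<lambda>j. residues \<Omega> (monom 1 j)" "coord_vector \<Omega> t"]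
      assms residues_eq_0_outside coord_vector_eq_0_outside[OF t]
    by (auto simp: card_residue_coords)
  define h where "h = (\<Sum>j<degree (lclm \<Omega>). lsmult (c j) (monom 1 j))"
  have "residues \<Omega> h = coord_vector \<Omega> t"
    using c unfolding h_def fun_eq_iff residues_sum_lsmult by blast
  then have "\<forall>P\<in>\<Omega>. rrem P h = t P"
    by (simp add: coord_vector_eq_iff)
  then show "\<exists>h. \<forall>P\<in>\<Omega>. right_dvd P (h - t P)"
    using monic right_dvd_diff_rrem by metis
qed

lemma exists_reduced_with_unit_residues:
  assumes "chinese_remainder \<Omega>" "\<kappa> \<in> residue_coords \<Omega>"
  shows "\<exists>p. reduced (lclm \<Omega>) p \<and> residues \<Omega> p = (\<lambda>\<kappa>'. if \<kappa>' = \<kappa> then 1 else 0)"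
proof -
  obtain P0 k0 where \<kappa>: "\<kappa> = (P0, k0)" "P0 \<in> \<Omega>" "k0 < degree P0"
    using assms(2) by (auto simp: residue_coords_def)
  define t where "t P = (if P = P0 then monom (1::'a) k0 else 0)" for P
  have "\<forall>P\<in>\<Omega>. reduced P (t P)"
    using \<kappa> by (auto simp: t_def reduced_def)
  then obtain h where h: "\<forall>P\<in>\<Omega>. right_dvd P (h - t P)"
    using assms(1) by (auto simp: chinese_remainder_def)
  define p where "p = rrem (lclm \<Omega>) h"
  have "rrem P p = t P" if "P \<in> \<Omega>" for P
  proof -
    have "right_dvd P (lclm \<Omega>)"
      using lclm_in_I[OF nontrivial] that by (simp add: mem_I_iff)
    then have "right_dvd P (h - p)"
      using right_dvd_diff_rrem[OF lead_coeff_lclm[OF nontrivial]] right_dvd_trans p_def by blast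
    then have "rrem P p = rrem P h"
      using rrem_eq_if_right_dvd_diff monic that right_dvd_minus by metis
    also have "\<dots> = t P"
      using rrem_unique monic that h \<open>\<forall>P\<in>\<Omega>. reduced P (t P)\<close> by blast
    finally show ?thesis .
  qed
  then have "residues \<Omega> p = coord_vector \<Omega> t"
    by (simp add: coord_vector_eq_iff)
  also have "coord_vector \<Omega> t = (\<lambda>\<kappa>'. if \<kappa>' = \<kappa> then 1 else 0)"
    using \<kappa> by (auto simp: coord_vector_def t_def fun_eq_iff)
  finally show ?thesis
    using reduced_rrem[OF lead_coeff_lclm[OF nontrivial]] p_def by blast
qed

lemma sum_degree_le_degree_lclm_if_chinese_remainder:
  assumes "chinese_remainder \<Omega>"
  shows "(\<Sum>P\<in>\<Omega>. degree P) \<le> degree (lclm \<Omega>)"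
proof -
  obtain p where p: "\<And>\<kappa>. \<kappa> \<in> residue_coords \<Omega> \<Longrightarrow>
      reduced (lclm \<Omega>) (p \<kappa>) \<and> residues \<Omega> (p \<kappa>) = (\<lambda>\<kappa>'. if \<kappa>' = \<kappa> then 1 else 0)"
    using exists_reduced_with_unit_residues[OF assms] by metis
  have "card (residue_coords \<Omega>) \<le> card {..<degree (lclm \<Omega>)}"
  proof (rule card_le_if_linearly_independent[OF finite_lessThan finite_residue_coords])
    show "\<forall>\<kappa>\<in>residue_coords \<Omega>. \<forall>i. i \<notin> {..<degree (lclm \<Omega>)} \<longrightarrow> coeff (p \<kappa>) i = 0"
      using p by (simp add: reduced_def)
  next
    fix c
    assume "\<forall>i. (\<Sum>\<kappa>\<in>residue_coords \<Omega>. c \<kappa> * coeff (p \<kappa>) i) = 0"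
    then have "(\<Sum>\<kappa>\<in>residue_coords \<Omega>. lsmult (c \<kappa>) (p \<kappa>)) = 0"
      by (simp add: poly_eq_iff coeff_sum)
    then have "residues \<Omega> (\<Sum>\<kappa>\<in>residue_coords \<Omega>. lsmult (c \<kappa>) (p \<kappa>)) \<kappa>0 = 0" for \<kappa>0
      using monic by (simp add: coord_vector_def rrem_0 split: prod.splits)
    then have "(\<Sum>\<kappa>\<in>residue_coords \<Omega>. c \<kappa> * (if \<kappa>0 = \<kappa> then 1 else 0)) = 0" for \<kappa>0
      using p by (simp add: residues_sum_lsmult cong: sum.cong)
    also have "(\<Sum>\<kappa>\<in>residue_coords \<Omega>. c \<kappa> * (if \<kappa>0 = \<kappa> then 1 else 0))
        = (\<Sum>\<kappa>\<in>residue_coords \<Omega>. if \<kappa>0 = \<kappa> then c \<kappa> else 0)" for \<kappa>0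
      by (intro sum.cong) auto
    finally show "\<forall>\<kappa>\<in>residue_coords \<Omega>. c \<kappa> = 0"
      using finite_residue_coords by simp metis
  qed
  then show ?thesis
    by (simp add: card_residue_coords)
qed

lemma P_independent_iff_chinese_remainder: "P_independent \<sigma> \<delta> \<Omega> \<longleftrightarrow> chinese_remainder \<Omega>"
  using chinese_remainder_if_degree_lclm_eq sum_degree_le_degree_lclm_if_chinese_remainder
    degree_lclm_le_sum_degree finite nontrivial
  by (auto simp: P_independent_def)

end

end

lemma skew_pow_0: "skew_pow \<sigma> \<delta> p 0 = [:1:]"
  by (simp add: skew_pow_def)

lemma skew_pow_Suc: "skew_pow \<sigma> \<delta> p (Suc n) = skew_pow \<sigma> \<delta> p n \<odot> p"
  by (simp add: skew_pow_def)

lemma skew_pow_1: "skew_pow \<sigma> \<delta> p 1 = p"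
  by (simp add: skew_pow_Suc skew_pow_0 skew_mult_const_left)

lemma skew_pow_add_Suc: "skew_pow \<sigma> \<delta> p (t + Suc s) = skew_pow \<sigma> \<delta> p t \<odot> skew_pow \<sigma> \<delta> p (Suc s)"
proof (induction s)
  case 0
  then show ?case
    by (simp add: skew_pow_Suc skew_pow_0 skew_mult_const_left)
next
  case (Suc s)
  have "skew_pow \<sigma> \<delta> p (t + Suc (Suc s)) = skew_pow \<sigma> \<delta> p (t + Suc s) \<odot> p"
    using skew_pow_Suc[of p "t + Suc s"] by simp
  also have "\<dots> = skew_pow \<sigma> \<delta> p t \<odot> skew_pow \<sigma> \<delta> p (Suc s) \<odot> p"
    using Suc by simp
  also have "\<dots> = skew_pow \<sigma> \<delta> p t \<odot> skew_pow \<sigma> \<delta> p (Suc (Suc s))"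
    by (simp only: skew_mult_assoc skew_pow_Suc[of p "Suc s"])
  finally show ?case .
qed

lemma right_dvd_skew_pow:
  assumes "1 \<le> s" "s \<le> r"
  shows "right_dvd (skew_pow \<sigma> \<delta> p s) (skew_pow \<sigma> \<delta> p r)"
proof -
  obtain s' where "s = Suc s'"
    using assms(1) by (cases s) auto
  with assms(2) have "skew_pow \<sigma> \<delta> p r = skew_pow \<sigma> \<delta> p (r - s) \<odot> skew_pow \<sigma> \<delta> p s"
    using skew_pow_add_Suc[of p "r - s" s'] by simp
  then show ?thesis
    by (auto simp: right_dvd_def)
qed

lemma skew_pow_monic:
  assumes "lead_coeff p = 1"
  shows "lead_coeff (skew_pow \<sigma> \<delta> p n) = 1 \<and> degree (skew_pow \<sigma> \<delta> p n) = n * degree p"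
proof (induction n)
  case (Suc n)
  then have nonzero: "skew_pow \<sigma> \<delta> p n \<noteq> 0"
    by auto
  have "degree (skew_pow \<sigma> \<delta> p n \<odot> p) = degree (skew_pow \<sigma> \<delta> p n) + degree p"
    by (rule degree_skew_mult_monic[OF nonzero assms])
  moreover have "lead_coeff (skew_pow \<sigma> \<delta> p n \<odot> p) = lead_coeff (skew_pow \<sigma> \<delta> p n)"
    by (rule lead_coeff_skew_mult_monic[OF nonzero assms])
  ultimately show ?case
    using Suc.IH by (auto simp: skew_pow_Suc)
qed (simp add: skew_pow_0)

lemma skew_pow_linear:
  "lead_coeff (skew_pow \<sigma> \<delta> [:- b, 1:] n) = 1" "degree (skew_pow \<sigma> \<delta> [:- b, 1:] n) = n"
  using skew_pow_monic[of "[:- b, 1:]" n] by auto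

lemma P_independent_image_right_dvd:
  assumes inj: "inj_on P A" and indep: "P_independent \<sigma> \<delta> (P ` A)"
    and monic: "\<forall>i\<in>A. lead_coeff (P i) = 1 \<and> lead_coeff (Q i) = 1"
    and dvd: "\<forall>i\<in>A. right_dvd (Q i) (P i)"
  shows "P_independent \<sigma> \<delta> (Q ` A)"
proof -
  have "finite A"
    using indep inj finite_image_iff by (auto simp: P_independent_def)
  have "I (P ` A) \<noteq> {0}"
    using indep by (simp add: P_independent_def)
  moreover have "I (P ` A) \<subseteq> I (Q ` A)"
    using dvd by (intro I_antimono_right_dvd) auto
  moreover have "0 \<in> I (P ` A)"
    by (simp add: mem_I_iff)
  ultimately have nontrivial: "I (Q ` A) \<noteq> {0}"
    by blast
  have crt: "chinese_remainder (P ` A)"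
    using indep P_independent_iff_chinese_remainder[of "P ` A"] monic \<open>finite A\<close>
    by (simp add: P_independent_def)
  have "chinese_remainder (Q ` A)"
    unfolding chinese_remainder_def
  proof (intro allI impI)
    fix t
    assume t: "\<forall>q\<in>Q ` A. reduced q (t q)"
    have "\<forall>p\<in>P ` A. reduced p (t (Q (inv_into A P p)))"
    proof
      fix p
      assume "p \<in> P ` A"
      then obtain i where "i \<in> A" "p = P i"
        by blast
      have "degree (Q i) \<le> degree (P i)"
        using monic dvd \<open>i \<in> A\<close> by (intro degree_le_if_right_dvd) auto
      moreover have "reduced (Q i) (t (Q i))"
        using t \<open>i \<in> A\<close> by blast
      ultimately show "reduced p (t (Q (inv_into A P p)))"
        using inj \<open>i \<in> A\<close> \<open>p = P i\<close> by (simp add: reduced_def)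
    qed
    then obtain h where "\<forall>p\<in>P ` A. right_dvd p (h - t (Q (inv_into A P p)))"
      using spec[OF crt[unfolded chinese_remainder_def], of "\<lambda>p. t (Q (inv_into A P p))"] by blast
    then have "right_dvd (Q i) (h - t (Q i))" if "i \<in> A" for i
      using inj dvd that right_dvd_trans[of "Q i" "P i"] by auto
    then show "\<exists>h. \<forall>q\<in>Q ` A. right_dvd q (h - t q)"
      by blast
  qed
  then show ?thesis
    using P_independent_iff_chinese_remainder[of "Q ` A"] monic \<open>finite A\<close> nontrivial by simp
qed

lemma degree_eq_0_if_P_independent_right_dvd:
  assumes indep: "P_independent \<sigma> \<delta> \<Omega>" and monic: "\<forall>P\<in>\<Omega>. lead_coeff P = 1"
    and "P \<in> \<Omega>" "Q \<in> \<Omega>" "P \<noteq> Q" "right_dvd P Q"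
  shows "degree P = 0"
proof -
  have "finite \<Omega>" and nontrivial: "I \<Omega> \<noteq> {0}"
    using indep by (simp_all add: P_independent_def)
  have "I \<Omega> = I (\<Omega> - {P})"
  proof
    show "I \<Omega> \<subseteq> I (\<Omega> - {P})"
      by (auto simp: mem_I_iff)
    show "I (\<Omega> - {P}) \<subseteq> I \<Omega>"
    proof
      fix G
      assume "G \<in> I (\<Omega> - {P})"
      then have others: "\<forall>P'\<in>\<Omega> - {P}. right_dvd P' G"
        by (simp add: mem_I_iff)
      then have "right_dvd P G"
        using assms(4-6) right_dvd_trans by blast
      with others show "G \<in> I \<Omega>"
        by (auto simp: mem_I_iff)
    qed
  qed
  have "(\<Sum>P\<in>\<Omega>. degree P) = degree (lclm \<Omega>)"
    using indep by (simp add: P_independent_def)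
  also have "\<dots> = degree (lclm (\<Omega> - {P}))"
    using lclm_eq_if_I_eq[OF \<open>I \<Omega> = I (\<Omega> - {P})\<close>] by simp
  also have "\<dots> \<le> (\<Sum>P\<in>\<Omega> - {P}. degree P)"
    using degree_lclm_le_sum_degree \<open>finite \<Omega>\<close> monic nontrivial \<open>I \<Omega> = I (\<Omega> - {P})\<close> by simp
  finally show ?thesis
    using sum.remove[OF \<open>finite \<Omega>\<close> \<open>P \<in> \<Omega>\<close>, of degree] by simp
qed

lemma inj_on_if_P_independent_linear_powers:
  assumes inj: "inj_on (\<lambda>i. skew_pow \<sigma> \<delta> [:- a i, 1:] (r i)) A" and pos: "\<forall>i\<in>A. 1 \<le> r i"
    and indep: "P_independent \<sigma> \<delta> ((\<lambda>i. skew_pow \<sigma> \<delta> [:- a i, 1:] (r i)) ` A)"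
  shows "inj_on a A"
proof -
  have eq_if_le: "i = j" if "i \<in> A" "j \<in> A" "a i = a j" "r i \<le> r j" for i j
  proof (rule ccontr)
    assume "i \<noteq> j"
    then have "skew_pow \<sigma> \<delta> [:- a i, 1:] (r i) \<noteq> skew_pow \<sigma> \<delta> [:- a j, 1:] (r j)"
      using inj that(1,2) by (auto dest: inj_onD)
    moreover have "right_dvd (skew_pow \<sigma> \<delta> [:- a i, 1:] (r i)) (skew_pow \<sigma> \<delta> [:- a j, 1:] (r j))"
      using right_dvd_skew_pow pos that by simp
    ultimately have "degree (skew_pow \<sigma> \<delta> [:- a i, 1:] (r i)) = 0"
      using that(1,2) skew_pow_linear(1)
      by (intro degree_eq_0_if_P_independent_right_dvd[OF indep]) auto
    moreover have "1 \<le> r i"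
      using pos that(1) by blast
    ultimately show False
      by (simp add: skew_pow_linear)
  qed
  show ?thesis
  proof (rule inj_onI)
    fix i j
    assume "i \<in> A" "j \<in> A" "a i = a j"
    then show "i = j"
      using eq_if_le[of i j] eq_if_le[of j i] by (cases "r i \<le> r j") auto
  qed
qed

end

theorem mainTheorem5:
  fixes \<sigma> \<delta> :: "'a::division_ring \<Rightarrow> 'a"
    and a :: "nat \<Rightarrow> 'a" and r :: "nat \<Rightarrow> nat" and n :: nat
  assumes "ring_endo \<sigma>" and "sigma_derivation \<sigma> \<delta>"
    and "\<forall>i<n. 1 \<le> r i"
    and "card ((\<lambda>i. skew_pow \<sigma> \<delta> [:- a i, 1:] (r i)) ` {..<n}) = n"
  shows "(P_independent \<sigma> \<delta> ((\<lambda>i. skew_pow \<sigma> \<delta> [:- a i, 1:] (r i)) ` {..<n}) \<longrightarrow>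
            (\<forall>s :: nat \<Rightarrow> nat. (\<forall>i<n. 1 \<le> s i \<and> s i \<le> r i) \<longrightarrow>
               P_independent \<sigma> \<delta> ((\<lambda>i. skew_pow \<sigma> \<delta> [:- a i, 1:] (s i)) ` {..<n})))
       \<and> (P_independent \<sigma> \<delta> ((\<lambda>i. skew_pow \<sigma> \<delta> [:- a i, 1:] (r i)) ` {..<n}) \<longrightarrow>
            card (a ` {..<n}) = n \<and> P_independent_elems \<sigma> \<delta> (a ` {..<n}))"
proof -
  interpret skew_poly_ring \<sigma> \<delta>
    by (rule skew_poly_ring.intro) fact+
  have inj: "inj_on (\<lambda>i. skew_pow \<sigma> \<delta> [:- a i, 1:] (r i)) {..<n}"
    using assms(4) by (intro eq_card_imp_inj_on) simp_all
  have smaller_exponents: "P_independent \<sigma> \<delta> ((\<lambda>i. skew_pow \<sigma> \<delta> [:- a i, 1:] (s i)) ` {..<n})"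
    if "P_independent \<sigma> \<delta> ((\<lambda>i. skew_pow \<sigma> \<delta> [:- a i, 1:] (r i)) ` {..<n})"
      and "\<forall>i<n. 1 \<le> s i \<and> s i \<le> r i" for s
    using that(2) skew_pow_linear(1)
    by (intro P_independent_image_right_dvd[OF inj that(1)] ballI conjI right_dvd_skew_pow) auto
  have distinct_independent_roots: "card (a ` {..<n}) = n \<and> P_independent_elems \<sigma> \<delta> (a ` {..<n})"
    if indep: "P_independent \<sigma> \<delta> ((\<lambda>i. skew_pow \<sigma> \<delta> [:- a i, 1:] (r i)) ` {..<n})"
  proof
    show "card (a ` {..<n}) = n"
      using inj_on_if_P_independent_linear_powers[OF inj _ indep] assms(3) by (simp add: card_image)
    have "(\<lambda>b. [:- b, 1:]) ` a ` {..<n} = (\<lambda>i. skew_pow \<sigma> \<delta> [:- a i, 1:] 1) ` {..<n}"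
      by (simp only: image_image skew_pow_1)
    then show "P_independent_elems \<sigma> \<delta> (a ` {..<n})"
      using smaller_exponents[OF indep, of "\<lambda>_. 1"] assms(3) by (auto simp: P_independent_elems_def)
  qed
  show ?thesis
    using smaller_exponents distinct_independent_roots by blast
qed

end
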